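(* Let $\Sigma^*$ be an $n\times n$ positive definite matrix with $\Omega^*=(\Sigma^* )^{-1}$ whose conditional independence structure is a tree $T^*$, and suppose that for every leaf $a$ of $T^*$ with neighbor $b$ we have $\Omega^*_{aa}>|\Omega^*_{ab}|$. Let $D^*$ be a diagonal matrix with nonnegative entries and $\Sigma^o=\Sigma^*+D^*$. Let $\Sigma^o=\Sigma'+D'$ where $\Sigma'$ is positive definite with conditional independence structure a tree $T'$, $D'$ is diagonal with nonnegative entries, and $\Omega'=(\Sigma')^{-1}$ satisfies $\Omega'_{aa}>|\Omega'_{ab}|$ for every leaf $a$ of $T'$ with neighbor $b$ in $T'$. Then $T'=T^*$.
   Context: For an $n\times n$ positive definite matrix $\Sigma$ with inverse $\Omega$, its conditional independence structure is the graph on $\{1,\dots,n\}$ with an edge $\{i,j\}$ ($i\neq j$) iff $\Omega_{ij}\neq 0$. *)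

theory Defs
  imports "HOL-Analysis.Analysis"
begin

definition pos_def :: "real^'n^'n \<Rightarrow> bool" where
  "pos_def A \<longleftrightarrow> transpose A = A \<and> (\<forall>x::real^'n. x \<noteq> 0 \<longrightarrow> x \<bullet> (A *v x) > 0)"

definition ci_adj :: "real^'n^'n \<Rightarrow> 'n \<Rightarrow> 'n \<Rightarrow> bool" where
  "ci_adj S i j \<longleftrightarrow> i \<noteq> j \<and> matrix_inv S $ i $ j \<noteq> 0"

text \<open>Simple graphs on the finite vertex type given by a symmetric irreflexive relation.\<close>
definition graph_connected :: "('n \<Rightarrow> 'n \<Rightarrow> bool) \<Rightarrow> bool" where
  "graph_connected E \<longleftrightarrow> (\<forall>u v. (u, v) \<in> {(x, y). E x y}\<^sup>*)"

definition has_cycle :: "('n \<Rightarrow> 'n \<Rightarrow> bool) \<Rightarrow> bool" where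
  "has_cycle E \<longleftrightarrow> (\<exists>vs. length vs \<ge> 3 \<and> distinct vs \<and>
      (\<forall>k < length vs - 1. E (vs ! k) (vs ! Suc k)) \<and> E (last vs) (hd vs))"

definition is_tree :: "('n \<Rightarrow> 'n \<Rightarrow> bool) \<Rightarrow> bool" where
  "is_tree E \<longleftrightarrow> graph_connected E \<and> \<not> has_cycle E"

definition is_leaf :: "('n::finite \<Rightarrow> 'n \<Rightarrow> bool) \<Rightarrow> 'n \<Rightarrow> bool" where
  "is_leaf E a \<longleftrightarrow> card {b. E a b} = 1"

definition leaf_cond :: "real^'n::finite^'n \<Rightarrow> bool" where
  "leaf_cond S \<longleftrightarrow> (\<forall>a b. is_leaf (ci_adj S) a \<and> ci_adj S a b \<longrightarrow>
      matrix_inv S $ a $ a > \<bar>matrix_inv S $ a $ b\<bar>)"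

definition nonneg_diag :: "real^'n^'n \<Rightarrow> bool" where
  "nonneg_diag D \<longleftrightarrow> (\<forall>i j. i \<noteq> j \<longrightarrow> D $ i $ j = 0) \<and> (\<forall>i. D $ i $ i \<ge> 0)"

end

(*
  Adding a diagonal matrix does not change off-diagonal entries, so Sigma* and Sigma' have
  the same off-diagonal part s. If the precision matrix Omega of Sigma has a tree T as its
  conditional independence graph, then for distinct a, b, c
    Sigma_ab Sigma_cc = Sigma_ac Sigma_cb                   if c separates a from b in T,
    Sigma_ab (Sigma_ab Sigma_cc - Sigma_ac Sigma_cb) > 0   otherwise;
  both follow from the minimum principle for the M-matrix that Omega becomes after the sign
  changes a tree admits. Hence at a vertex c that separates some pair, Sigma_cc is the largest
  of the ratios s_ac s_cb / s_ab, attained exactly at the pairs c separates, so s determines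
  which pairs c separates. It remains to exclude a vertex x that separates a pair in one tree
  but is a leaf of the other, attached to y. Then y is a leaf of the first tree, attached to
  some w, and separates x from w in the second: y is misplaced in the same way with the trees
  exchanged, and the leaf condition gives |s_yw| > |s_xy|. This cannot go on forever, so both
  trees have the same separations and therefore the same edges.
*)

theory Submission
  imports Defs "HOL-Library.Transitive_Closure_Table"
begin

section \<open>Separation in trees\<close>

definition avoiding :: "('n \<Rightarrow> 'n \<Rightarrow> bool) \<Rightarrow> 'n \<Rightarrow> ('n \<times> 'n) set" where
  "avoiding E c = {(x, y). E x y \<and> x \<noteq> c \<and> y \<noteq> c}"

definition separates :: "('n \<Rightarrow> 'n \<Rightarrow> bool) \<Rightarrow> 'n \<Rightarrow> 'n \<Rightarrow> 'n \<Rightarrow> bool" where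
  "separates E c a b \<longleftrightarrow> a \<noteq> c \<and> b \<noteq> c \<and> (a, b) \<notin> (avoiding E c)\<^sup>*"

lemma separates_distinct: "separates E c a b \<Longrightarrow> a \<noteq> b \<and> a \<noteq> c \<and> b \<noteq> c"
  unfolding separates_def by auto

lemma adjacent_not_separated: "E a b \<Longrightarrow> \<not> separates E c a b"
  unfolding separates_def avoiding_def by auto

lemma has_cycle_if_edge_bypassed:
  assumes "E a b" and "a \<noteq> b"
    and "(b, a) \<in> ({(x, y). E x y} - {(a, b), (b, a)})\<^sup>*"
  shows "has_cycle E"
proof -
  define R where "R x y \<longleftrightarrow> (x, y) \<in> {(x, y). E x y} - {(a, b), (b, a)}" for x y
  have "{(x, y). R x y} = {(x, y). E x y} - {(a, b), (b, a)}" by (auto simp: R_def)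
  then have "R\<^sup>*\<^sup>* b a" using assms(3) by (simp add: rtranclp_rtrancl_eq)
  then obtain xs where "rtrancl_path R b xs a" by (auto simp: rtranclp_eq_rtrancl_path)
  then obtain ys where path: "rtrancl_path R b ys a" and "distinct (b # ys)"
    by (rule rtrancl_path_distinct)
  have "length ys \<ge> 2"
  proof (cases ys)
    case Nil
    then show ?thesis using path \<open>a \<noteq> b\<close> by (auto elim: rtrancl_path.cases)
  next
    case (Cons y ys')
    have "ys' \<noteq> []"
    proof
      assume "ys' = []"
      with path Cons have "R b a" by (auto elim!: rtrancl_path.cases)
      then show False by (auto simp: R_def)
    qed
    with Cons show ?thesis by (cases ys') auto
  qed
  show ?thesis unfolding has_cycle_def
  proof (intro exI[of _ "b # ys"] conjI allI impI)
    show "3 \<le> length (b # ys)" "distinct (b # ys)"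
      using \<open>length ys \<ge> 2\<close> \<open>distinct (b # ys)\<close> by simp_all
    fix k assume "k < length (b # ys) - 1"
    then have "R ((b # ys) ! k) (ys ! k)" using rtrancl_path_nth[OF path] by simp
    then show "E ((b # ys) ! k) ((b # ys) ! Suc k)" by (simp add: R_def)
  next
    have "ys \<noteq> []" using \<open>2 \<le> length ys\<close> by auto
    then have "last (b # ys) = a" using rtrancl_path_last[OF path] by simp
    then show "E (last (b # ys)) (hd (b # ys))" using \<open>E a b\<close> by simp
  qed
qed

lemma leaf_neighbour_unique:
  assumes "is_leaf E x" "E x y" "E x z"
  shows "z = y"
proof -
  obtain w where "{b. E x b} = {w}" using assms(1) by (auto simp: is_leaf_def card_Suc_eq)
  with assms(2,3) show ?thesis by (metis mem_Collect_eq singletonD)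
qed

lemma leaf_has_neighbour: "is_leaf E x \<Longrightarrow> \<exists>y. E x y"
  by (auto simp: is_leaf_def card_Suc_eq)

lemma leaf_neighbour_separates:
  assumes "is_leaf E x" "E x y" "\<not> E y y" "a \<noteq> x" "a \<noteq> y"
  shows "separates E y x a"
proof -
  have "z = x" if "(x, z) \<in> (avoiding E y)\<^sup>*" for z
    using that
    by (induction rule: rtrancl_induct)
       (auto simp: avoiding_def dest: leaf_neighbour_unique[OF assms(1,2)])
  moreover have "x \<noteq> y" using assms(2,3) by blast
  ultimately show ?thesis using assms(4,5) unfolding separates_def by blast
qed

lemma rtrancl_path_avoiding:
  assumes "rtrancl_path E x ys z" "c \<notin> set (x # ys)"
  shows "(x, z) \<in> (avoiding E c)\<^sup>*"
  using assms
  by (induction rule: rtrancl_path.induct)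
     (auto simp: avoiding_def intro: converse_rtrancl_into_rtrancl)

lemma acyclic_neighbours_disconnected:
  assumes sym: "\<And>u v. E u v \<Longrightarrow> E v u" and irrefl: "\<And>u. \<not> E u u" and "\<not> has_cycle E"
    and "v \<notin> W" "E v w1" "E v w2" and path: "(w1, w2) \<in> {(x, y). E x y \<and> x \<in> W \<and> y \<in> W}\<^sup>*"
  shows "w1 = w2"
proof (rule ccontr)
  let ?B = "{(x, y). E x y} - {(v, w1), (w1, v)}"
  assume "w1 \<noteq> w2"
  have "{(x, y). E x y \<and> x \<in> W \<and> y \<in> W}\<^sup>* \<subseteq> ?B\<^sup>*"
    using \<open>v \<notin> W\<close> by (intro rtrancl_mono) auto
  with path have "(w1, w2) \<in> ?B\<^sup>*" by blast
  moreover have "(w2, v) \<in> ?B" using sym[OF \<open>E v w2\<close>] \<open>w1 \<noteq> w2\<close> irrefl \<open>E v w2\<close> by auto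
  ultimately have "(w1, v) \<in> ?B\<^sup>*" by (rule rtrancl_into_rtrancl)
  then have "has_cycle E"
    using has_cycle_if_edge_bypassed[of E v w1] irrefl \<open>E v w1\<close> by blast
  with \<open>\<not> has_cycle E\<close> show False ..
qed

lemma acyclic_labelling_is_cut:
  fixes E p :: "'n::finite \<Rightarrow> 'n \<Rightarrow> bool"
  assumes sym: "\<And>u v. E u v \<Longrightarrow> E v u" and irrefl: "\<And>u. \<not> E u u"
    and acyclic: "\<not> has_cycle E" and p_sym: "\<And>u v. p u v = p v u"
  obtains t :: "'n \<Rightarrow> bool" where "\<And>a b. E a b \<Longrightarrow> t a \<noteq> t b \<longleftrightarrow> p a b"
proof -
  have "\<exists>t::'n \<Rightarrow> bool. \<forall>a\<in>W. \<forall>b\<in>W. E a b \<longrightarrow> (t a \<noteq> t b \<longleftrightarrow> p a b)" if "finite W" for W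
    using that
  proof (induction W rule: finite_induct)
    case empty
    then show ?case by simp
  next
    case (insert v W)
    from insert.IH obtain t :: "'n \<Rightarrow> bool"
      where t: "\<And>a b. a \<in> W \<Longrightarrow> b \<in> W \<Longrightarrow> E a b \<Longrightarrow> t a \<noteq> t b \<longleftrightarrow> p a b" by blast
    define R where "R = {(x, y). E x y \<and> x \<in> W \<and> y \<in> W}"
    \<comment> \<open>Flip the colouring on the component of each neighbour of v that needs it; by
      acyclicity no component contains two neighbours of v.\<close>
    define flip where "flip x \<longleftrightarrow> (\<exists>w. E v w \<and> (w, x) \<in> R\<^sup>* \<and> (t w \<longleftrightarrow> p v w))" for x
    define t' where "t' x = (if x = v then True else t x \<noteq> flip x)" for x
    have new_edge: "t' v \<noteq> t' b \<longleftrightarrow> p v b" if "E v b" "b \<in> W" for b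
    proof -
      have "w = b" if "E v w" "(w, b) \<in> R\<^sup>*" for w
        using acyclic_neighbours_disconnected[OF sym irrefl acyclic insert.hyps(2)] that \<open>E v b\<close>
        unfolding R_def by blast
      then have "flip b \<longleftrightarrow> (t b \<longleftrightarrow> p v b)" using that unfolding flip_def by blast
      then show ?thesis using that insert.hyps(2) by (auto simp: t'_def)
    qed
    have old_edge: "t' a \<noteq> t' b \<longleftrightarrow> p a b" if "E a b" "a \<in> W" "b \<in> W" for a b
    proof -
      have "(a, b) \<in> R\<^sup>*" "(b, a) \<in> R\<^sup>*" using that by (auto simp: R_def intro: sym)
      then have "flip a \<longleftrightarrow> flip b" unfolding flip_def by (meson rtrancl_trans)
      then show ?thesis using that t[OF that(2,3,1)] insert.hyps(2) by (auto simp: t'_def)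
    qed
    have "t' a \<noteq> t' b \<longleftrightarrow> p a b" if "a \<in> insert v W" "b \<in> insert v W" and ab: "E a b" for a b
    proof -
      consider "a = v" "b \<in> W" | "a \<in> W" "b = v" | "a \<in> W" "b \<in> W"
        using \<open>a \<in> insert v W\<close> \<open>b \<in> insert v W\<close> ab irrefl by blast
      then show ?thesis
        using new_edge[of b] new_edge[of a] old_edge[OF ab] sym[OF ab] ab p_sym[of a b]
        by cases auto
    qed
    then show ?case by blast
  qed
  from this[of UNIV] that show ?thesis by auto
qed

locale tree_graph =
  fixes E :: "'n::finite \<Rightarrow> 'n \<Rightarrow> bool"
  assumes edge_sym: "E a b \<Longrightarrow> E b a"
    and edge_irrefl: "\<not> E a a"
    and tree: "is_tree E"
begin

lemma connected: "(a, b) \<in> {(x, y). E x y}\<^sup>*"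
  using tree by (simp add: is_tree_def graph_connected_def)

lemma acyclic: "\<not> has_cycle E"
  using tree by (simp add: is_tree_def)

lemma adjacent_distinct: "E a b \<Longrightarrow> a \<noteq> b"
  using edge_irrefl by blast

lemma sym_avoiding: "sym ((avoiding E c)\<^sup>*)"
  by (rule sym_rtrancl) (auto simp: sym_def avoiding_def intro: edge_sym)

lemma separates_commute: "separates E c a b \<longleftrightarrow> separates E c b a"
  using sym_avoiding[of c] unfolding separates_def sym_def by blast

lemma edge_not_bypassed: "E a b \<Longrightarrow> (b, a) \<notin> ({(x, y). E x y} - {(a, b), (b, a)})\<^sup>*"
  using has_cycle_if_edge_bypassed[of E a b] acyclic adjacent_distinct[of a b] by argo

lemma rtrancl_avoiding_subset_minus_edge:
  "c \<in> {a, b} \<Longrightarrow> (avoiding E c)\<^sup>* \<subseteq> ({(x, y). E x y} - {(a, b), (b, a)})\<^sup>*"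
  by (rule rtrancl_mono) (auto simp: avoiding_def)

lemma neighbours_separated:
  assumes "E v p" "E v q" "p \<noteq> q"
  shows "separates E v p q"
proof (rule ccontr)
  let ?R = "{(x, y). E x y} - {(v, p), (p, v)}"
  assume "\<not> separates E v p q"
  then have "(p, q) \<in> (avoiding E v)\<^sup>*"
    using assms adjacent_distinct by (auto simp: separates_def)
  then have "(p, q) \<in> ?R\<^sup>*"
    using rtrancl_avoiding_subset_minus_edge[of v v p] by blast
  moreover have "(q, v) \<in> ?R"
    using assms adjacent_distinct edge_sym by auto
  ultimately have "(p, v) \<in> ?R\<^sup>*" by (rule rtrancl_into_rtrancl)
  with edge_not_bypassed[OF assms(1)] show False by blast
qed

lemma nonadjacent_separated:
  assumes "a \<noteq> b" "\<not> E a b"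
  obtains c where "separates E c a b"
proof -
  have "E\<^sup>*\<^sup>* a b" using connected by (simp add: rtranclp_rtrancl_eq)
  then obtain xs where "rtrancl_path E a xs b" by (auto simp: rtranclp_eq_rtrancl_path)
  then obtain ys where path: "rtrancl_path E a ys b" and "distinct (a # ys)"
    by (rule rtrancl_path_distinct)
  with assms(1) obtain c ys' where "ys = c # ys'" "E a c" and path': "rtrancl_path E c ys' b"
    by (auto elim: rtrancl_path.cases)
  have "separates E c a b"
  proof (rule ccontr)
    let ?R = "{(x, y). E x y} - {(a, c), (c, a)}"
    assume "\<not> separates E c a b"
    then have "(a, b) \<in> (avoiding E c)\<^sup>*"
      using assms \<open>E a c\<close> adjacent_distinct by (auto simp: separates_def)
    then have "(b, a) \<in> (avoiding E c)\<^sup>*"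
      using sym_avoiding[of c] by (simp add: sym_def)
    moreover have "(c, b) \<in> (avoiding E a)\<^sup>*"
      using rtrancl_path_avoiding[OF path'] \<open>distinct (a # ys)\<close> \<open>ys = c # ys'\<close> by simp
    ultimately have "(c, a) \<in> ?R\<^sup>*"
      using rtrancl_avoiding_subset_minus_edge[of a a c] rtrancl_avoiding_subset_minus_edge[of c a c]
      by (blast intro: rtrancl_trans)
    with edge_not_bypassed[OF \<open>E a c\<close>] show False by blast
  qed
  then show ?thesis by (rule that)
qed

lemma adjacent_iff_unseparated: "E a b \<longleftrightarrow> a \<noteq> b \<and> (\<forall>c. \<not> separates E c a b)"
proof (intro iffI)
  assume "E a b"
  then show "a \<noteq> b \<and> (\<forall>c. \<not> separates E c a b)"
    by (simp add: adjacent_not_separated adjacent_distinct)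
next
  assume unsep: "a \<noteq> b \<and> (\<forall>c. \<not> separates E c a b)"
  show "E a b"
  proof (rule ccontr)
    assume "\<not> E a b"
    with unsep obtain c where "separates E c a b" by (blast elim: nonadjacent_separated)
    with unsep show False by blast
  qed
qed

lemma unseparating_is_leaf:
  assumes "w \<noteq> v" and unsep: "\<And>a b. \<not> separates E v a b"
  shows "is_leaf E v"
proof -
  obtain y where "E v y"
    using connected[of v w] \<open>w \<noteq> v\<close> by (cases rule: converse_rtranclE) auto
  have "z = y" if "E v z" for z
    using neighbours_separated[OF that \<open>E v y\<close>] unsep by blast
  then have "{b. E v b} = {y}" using \<open>E v y\<close> by blast
  then show ?thesis by (simp add: is_leaf_def)
qed

end

section \<open>Separation models\<close>

lemma mutual_factorisation_sq:
  fixes u w t e e' :: real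
  assumes "u * e = t * w" "w * e' = t * u" "u \<noteq> 0" "w \<noteq> 0"
  shows "e * e' = t\<^sup>2"
proof -
  have "(u * w) * (e * e') = (u * w) * t\<^sup>2"
    using arg_cong2[where f = "(*)", OF assms(1,2)] by (simp add: algebra_simps power2_eq_square)
  with assms(3,4) show ?thesis by simp
qed

text \<open>An abstraction of a covariance matrix whose precision matrix has conditional independence
  graph E: d is its diagonal and s its off-diagonal part.\<close>

locale tree_separation_model = tree_graph E for E :: "'n::finite \<Rightarrow> 'n \<Rightarrow> bool" +
  fixes d :: "'n \<Rightarrow> real" and s :: "'n \<Rightarrow> 'n \<Rightarrow> real"
  assumes s_sym: "s a b = s b a"
    and s_nonzero: "a \<noteq> b \<Longrightarrow> s a b \<noteq> 0"
    and d_pos: "0 < d a"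
    and s_sq_less: "a \<noteq> b \<Longrightarrow> (s a b)\<^sup>2 < d a * d b"
    and separated_product: "separates E c a b \<Longrightarrow> s a b * d c = s a c * s c b"
    and unseparated_product_less:
      "a \<noteq> b \<Longrightarrow> a \<noteq> c \<Longrightarrow> b \<noteq> c \<Longrightarrow> \<not> separates E c a b \<Longrightarrow>
        0 < s a b * (s a b * d c - s a c * s c b)"
    and leaf_edge_less: "is_leaf E a \<Longrightarrow> E a b \<Longrightarrow> \<bar>s a b\<bar> < d b"
begin

text \<open>So d v is the largest ratio \<open>s a v * s v b / s a b\<close>, attained exactly at the pairs that v
  separates; in particular s determines d v at every vertex that separates some pair.\<close>

lemma product_ratio_le:
  assumes "a \<noteq> b" "a \<noteq> v" "b \<noteq> v" and ratio: "s a b * x = s a v * s v b"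
  shows "x \<le> d v" and "x = d v \<Longrightarrow> separates E v a b"
proof -
  have "s a b \<noteq> 0" using s_nonzero \<open>a \<noteq> b\<close> .
  have "x < d v" if "\<not> separates E v a b"
  proof -
    have "0 < (s a b)\<^sup>2 * (d v - x)"
      using unseparated_product_less[OF assms(1-3) that] ratio
      by (simp add: power2_eq_square algebra_simps)
    then show ?thesis by (simp add: zero_less_mult_iff)
  qed
  moreover have "x = d v" if "separates E v a b"
    using separated_product[OF that] ratio \<open>s a b \<noteq> 0\<close> by (metis mult_left_cancel)
  ultimately show "x \<le> d v" "x = d v \<Longrightarrow> separates E v a b"
    by (cases "separates E v a b"; force)+
qed

lemma separated_twice_bound:
  assumes sep_x: "separates E x p q" and sep_p: "separates E y x p" and sep_q: "separates E y x q"
  shows "d x * d y \<le> (s x y)\<^sup>2"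
proof -
  have dist: "p \<noteq> q" "x \<noteq> y" "p \<noteq> y" "q \<noteq> y"
    using separates_distinct[OF sep_x] separates_distinct[OF sep_p] separates_distinct[OF sep_q]
    by auto
  have "s p q * (d x * (d y)\<^sup>2) = (s x p * d y) * (s x q * d y)"
    using separated_product[OF sep_x] s_sym[of p x] by (simp add: algebra_simps power2_eq_square)
  also have "\<dots> = (s x y)\<^sup>2 * (s p y * s y q)"
    using separated_product[OF sep_p] separated_product[OF sep_q] s_sym[of y p]
    by (simp add: algebra_simps power2_eq_square)
  finally have "s p q * (d x * (d y)\<^sup>2 / (s x y)\<^sup>2) = s p y * s y q"
    using s_nonzero[OF \<open>x \<noteq> y\<close>] by (simp add: field_simps)
  then have "d x * (d y)\<^sup>2 / (s x y)\<^sup>2 \<le> d y"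
    using product_ratio_le(1) dist by blast
  moreover have "0 < (s x y)\<^sup>2" using s_nonzero[OF \<open>x \<noteq> y\<close>] by simp
  ultimately have "d y * (d x * d y) \<le> d y * (s x y)\<^sup>2"
    by (simp add: pos_divide_le_eq power2_eq_square mult_ac)
  then show ?thesis using d_pos[of y] by simp
qed

lemma cut_off_vertex_separates_nothing:
  assumes "x \<noteq> y" and cut_off: "\<And>a. a \<noteq> x \<Longrightarrow> a \<noteq> y \<Longrightarrow> separates E y x a"
  shows "\<not> separates E x p q"
proof
  assume "separates E x p q"
  then have "\<exists>p' q'. separates E x p' q' \<and> q' \<noteq> y"
    using separates_commute[of x p q] separates_distinct[of E x p q] by (cases "q = y") auto
  then obtain p' q' where sep: "separates E x p' q'" and "q' \<noteq> y" by blast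
  have dist: "p' \<noteq> q'" "p' \<noteq> x" "q' \<noteq> x" using separates_distinct[OF sep] by auto
  have sep_q: "separates E y x q'" using cut_off[OF dist(3) \<open>q' \<noteq> y\<close>] .
  have "d x * d y \<le> (s x y)\<^sup>2"
  proof (cases "p' = y")
    case True
    have "d y * d x = (s x y)\<^sup>2"
    proof (rule mutual_factorisation_sq)
      show "s x q' * d y = s x y * s y q'" using separated_product[OF sep_q] .
      show "s y q' * d x = s x y * s x q'" using separated_product[OF sep] True s_sym[of y x] by simp
    qed (use s_nonzero dist \<open>q' \<noteq> y\<close> in auto)
    then show ?thesis by (simp add: mult.commute)
  next
    case False
    then show ?thesis using separated_twice_bound[OF sep cut_off[OF dist(2) False] sep_q] by blast
  qed
  with s_sq_less[OF \<open>x \<noteq> y\<close>] show False by simp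
qed

end

lemma common_separator_same_diag:
  assumes "tree_separation_model E1 d1 s" "tree_separation_model E2 d2 s"
    and sep1: "separates E1 v a b" and sep2: "separates E2 v a' b'"
  shows "d1 v = d2 v"
proof -
  interpret M1: tree_separation_model E1 d1 s by fact
  interpret M2: tree_separation_model E2 d2 s by fact
  have "d1 v \<le> d2 v"
    using M2.product_ratio_le(1)[OF _ _ _ M1.separated_product[OF sep1]] separates_distinct[OF sep1]
    by blast
  moreover have "d2 v \<le> d1 v"
    using M1.product_ratio_le(1)[OF _ _ _ M2.separated_product[OF sep2]] separates_distinct[OF sep2]
    by blast
  ultimately show ?thesis by simp
qed

lemma separates_transfer:
  assumes "tree_separation_model E1 d1 s" "tree_separation_model E2 d2 s"
    and "d1 v = d2 v" and sep: "separates E1 v a b"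
  shows "separates E2 v a b"
proof -
  interpret M1: tree_separation_model E1 d1 s by fact
  interpret M2: tree_separation_model E2 d2 s by fact
  show ?thesis
    using M2.product_ratio_le(2)[OF _ _ _ M1.separated_product[OF sep]] separates_distinct[OF sep]
      \<open>d1 v = d2 v\<close> by blast
qed

definition misplaced_leaf :: "('n::finite \<Rightarrow> 'n \<Rightarrow> bool) \<Rightarrow> ('n \<Rightarrow> 'n \<Rightarrow> bool) \<Rightarrow> 'n \<Rightarrow> 'n \<Rightarrow> bool"
  where "misplaced_leaf E1 E2 x y \<longleftrightarrow> is_leaf E1 x \<and> E1 x y \<and> (\<exists>p q. separates E2 x p q)"

lemma misplaced_leaf_neighbour_is_leaf:
  assumes "tree_separation_model E1 d1 s" "tree_separation_model E2 d2 s"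
    and "misplaced_leaf E1 E2 x y"
  shows "is_leaf E2 y"
proof -
  interpret M1: tree_separation_model E1 d1 s by fact
  interpret M2: tree_separation_model E2 d2 s by fact
  obtain p q where leaf: "is_leaf E1 x" and "E1 x y" and sep: "separates E2 x p q"
    using \<open>misplaced_leaf E1 E2 x y\<close> by (auto simp: misplaced_leaf_def)
  have "x \<noteq> y" using M1.adjacent_distinct[OF \<open>E1 x y\<close>] .
  have cut_off1: "separates E1 y x a" if "a \<noteq> x" "a \<noteq> y" for a
    using leaf_neighbour_separates[OF leaf \<open>E1 x y\<close> M1.edge_irrefl that] .
  have "\<exists>a. a \<noteq> x \<and> a \<noteq> y" using separates_distinct[OF sep] by (cases "p = y") auto
  then obtain a where "a \<noteq> x" "a \<noteq> y" by blast
  have "\<not> separates E2 y a' b'" for a' b'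
  proof
    assume "separates E2 y a' b'"
    then have "d1 y = d2 y"
      using common_separator_same_diag[OF assms(1,2) cut_off1[OF \<open>a \<noteq> x\<close> \<open>a \<noteq> y\<close>]] by blast
    then have "separates E2 y x b" if "b \<noteq> x" "b \<noteq> y" for b
      using separates_transfer[OF assms(1,2) _ cut_off1[OF that]] by blast
    with M2.cut_off_vertex_separates_nothing[OF \<open>x \<noteq> y\<close>] sep show False by blast
  qed
  then show ?thesis using M2.unseparating_is_leaf[OF \<open>x \<noteq> y\<close>] by blast
qed

lemma leaf_edges_not_crossed:
  assumes "tree_separation_model E1 d1 s" "tree_separation_model E2 d2 s"
    and "is_leaf E1 x" "E1 x y" "is_leaf E2 y" "E2 y x" and "a \<noteq> x" "a \<noteq> y"
  shows False
proof -
  interpret M1: tree_separation_model E1 d1 s by fact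
  interpret M2: tree_separation_model E2 d2 s by fact
  have h1: "s x a * d1 y = s x y * s y a"
    by (rule M1.separated_product[OF leaf_neighbour_separates]) (use assms M1.edge_irrefl in auto)
  have h2: "s y a * d2 x = s y x * s x a"
    by (rule M2.separated_product[OF leaf_neighbour_separates]) (use assms M2.edge_irrefl in auto)
  have "d1 y * d2 x = (s x y)\<^sup>2"
    using mutual_factorisation_sq[OF h1] h2 M1.s_sym[of y x] M1.s_nonzero assms(7,8) by simp
  then have "d1 y * d2 x = \<bar>s x y\<bar> * \<bar>s x y\<bar>" by (simp add: power2_eq_square)
  moreover have "\<bar>s x y\<bar> < d1 y" using M1.leaf_edge_less assms(3,4) by blast
  moreover have "\<bar>s x y\<bar> < d2 x" using M2.leaf_edge_less assms(5,6) M1.s_sym[of y x] by force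
  ultimately show False using mult_strict_mono[of "\<bar>s x y\<bar>" "d1 y" "\<bar>s x y\<bar>" "d2 x"] by simp
qed

lemma leaf_edge_weights_increase:
  assumes "tree_separation_model E1 d1 s" "tree_separation_model E2 d2 s"
    and "is_leaf E1 x" "E1 x y" "is_leaf E2 y" "E2 y w" and "w \<noteq> x"
  shows "\<bar>s x y\<bar> < \<bar>s y w\<bar>"
proof -
  interpret M1: tree_separation_model E1 d1 s by fact
  interpret M2: tree_separation_model E2 d2 s by fact
  have "x \<noteq> y" "y \<noteq> w"
    using M1.adjacent_distinct[OF assms(4)] M2.adjacent_distinct[OF assms(6)] by auto
  have h1: "s x w * d1 y = s x y * s y w"
    by (rule M1.separated_product[OF leaf_neighbour_separates])
       (use assms \<open>y \<noteq> w\<close> M1.edge_irrefl in auto)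
  have h2: "s y x * d2 w = s y w * s w x"
    by (rule M2.separated_product[OF leaf_neighbour_separates])
       (use assms \<open>x \<noteq> y\<close> M2.edge_irrefl in auto)
  have "d1 y * d2 w = (s y w)\<^sup>2"
  proof (rule mutual_factorisation_sq)
    show "s x w * d1 y = s y w * s x y" using h1 by (simp add: mult.commute)
    show "s x y * d2 w = s y w * s x w" using h2 M1.s_sym[of y x] M1.s_sym[of w x] by simp
  qed (use M1.s_nonzero assms(7) \<open>x \<noteq> y\<close> in auto)
  then have "d1 y * d2 w = \<bar>s y w\<bar> * \<bar>s y w\<bar>" by (simp add: power2_eq_square)
  moreover have "\<bar>s y w\<bar> < d2 w" using M2.leaf_edge_less assms(5,6) by blast
  moreover have "0 < \<bar>s y w\<bar>" using M1.s_nonzero \<open>y \<noteq> w\<close> by simp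
  ultimately have "d1 y * d2 w < \<bar>s y w\<bar> * d2 w"
    using mult_strict_left_mono[of "\<bar>s y w\<bar>" "d2 w" "\<bar>s y w\<bar>"] by (simp add: mult.commute)
  then have "d1 y < \<bar>s y w\<bar>" using M2.d_pos[of w] by simp
  moreover have "\<bar>s x y\<bar> < d1 y" using M1.leaf_edge_less assms(3,4) by blast
  ultimately show ?thesis by simp
qed

lemma misplaced_leaf_step:
  assumes "tree_separation_model E1 d1 s" "tree_separation_model E2 d2 s"
    and "misplaced_leaf E1 E2 x y"
  obtains w where "misplaced_leaf E2 E1 y w" and "\<bar>s x y\<bar> < \<bar>s y w\<bar>"
proof -
  interpret M1: tree_separation_model E1 d1 s by fact
  interpret M2: tree_separation_model E2 d2 s by fact
  obtain p q where leaf: "is_leaf E1 x" and "E1 x y" and sep: "separates E2 x p q"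
    using \<open>misplaced_leaf E1 E2 x y\<close> by (auto simp: misplaced_leaf_def)
  have leaf2: "is_leaf E2 y" by (rule misplaced_leaf_neighbour_is_leaf) fact+
  then obtain w where "E2 y w" using leaf_has_neighbour by blast
  have "\<exists>a. a \<noteq> x \<and> a \<noteq> y" using separates_distinct[OF sep] by (cases "p = y") auto
  then have "w \<noteq> x"
    using leaf_edges_not_crossed[OF assms(1,2) leaf \<open>E1 x y\<close> leaf2] \<open>E2 y w\<close> by blast
  have "separates E1 y x w"
    using leaf_neighbour_separates[OF leaf \<open>E1 x y\<close> M1.edge_irrefl[of y] \<open>w \<noteq> x\<close>]
      M2.adjacent_distinct[OF \<open>E2 y w\<close>] by blast
  then have "misplaced_leaf E2 E1 y w" using leaf2 \<open>E2 y w\<close> by (auto simp: misplaced_leaf_def)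
  moreover have "\<bar>s x y\<bar> < \<bar>s y w\<bar>"
    by (rule leaf_edge_weights_increase) fact+
  ultimately show ?thesis by (rule that)
qed

lemma no_misplaced_leaf:
  assumes "tree_separation_model E1 d1 s" "tree_separation_model E2 d2 s"
  shows "\<not> misplaced_leaf E1 E2 x y"
proof
  define P where "P = {(x, y). misplaced_leaf E1 E2 x y \<or> misplaced_leaf E2 E1 x y}"
  define f where "f = (\<lambda>(u, v). \<bar>s u v\<bar>)"
  assume "misplaced_leaf E1 E2 x y"
  then have "P \<noteq> {}" by (auto simp: P_def)
  then have "Max (f ` P) \<in> f ` P" by simp
  then obtain x' y' where "(x', y') \<in> P" and max: "\<bar>s x' y'\<bar> = Max (f ` P)"
    by (auto simp: f_def)
  have "\<exists>w. (y', w) \<in> P \<and> \<bar>s x' y'\<bar> < \<bar>s y' w\<bar>"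
  proof (cases "misplaced_leaf E1 E2 x' y'")
    case True
    from misplaced_leaf_step[OF assms this] show ?thesis unfolding P_def by blast
  next
    case False
    with \<open>(x', y') \<in> P\<close> have "misplaced_leaf E2 E1 x' y'" by (simp add: P_def)
    from misplaced_leaf_step[OF assms(2,1) this] show ?thesis unfolding P_def by blast
  qed
  then obtain w where "(y', w) \<in> P" and "\<bar>s x' y'\<bar> < \<bar>s y' w\<bar>" by blast
  moreover have "\<bar>s y' w\<bar> \<le> Max (f ` P)"
    using \<open>(y', w) \<in> P\<close> by (auto simp: f_def intro!: Max_ge)
  ultimately show False using max by simp
qed

lemma separator_in_both:
  assumes "tree_separation_model E1 d1 s" "tree_separation_model E2 d2 s"
    and sep: "separates E1 v a b"
  shows "\<exists>a' b'. separates E2 v a' b'"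
proof (rule ccontr)
  interpret M2: tree_separation_model E2 d2 s by fact
  assume none: "\<nexists>a' b'. separates E2 v a' b'"
  have "a \<noteq> v" using separates_distinct[OF sep] by blast
  then have "is_leaf E2 v" using M2.unseparating_is_leaf none by blast
  then obtain z where "E2 v z" using leaf_has_neighbour by blast
  then have "misplaced_leaf E2 E1 v z" using \<open>is_leaf E2 v\<close> sep by (auto simp: misplaced_leaf_def)
  with no_misplaced_leaf[OF assms(2,1)] show False by blast
qed

lemma separates_iff:
  assumes "tree_separation_model E1 d1 s" "tree_separation_model E2 d2 s"
  shows "separates E1 v a b \<longleftrightarrow> separates E2 v a b"
proof -
  have "separates E' v a b"
    if M: "tree_separation_model E d s" and M': "tree_separation_model E' d' s"
      and sep: "separates E v a b"
    for E E' :: "'a \<Rightarrow> 'a \<Rightarrow> bool" and d d'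
  proof -
    obtain a' b' where "separates E' v a' b'" using separator_in_both[OF M M' sep] by blast
    with M M' sep have "d v = d' v" by (rule common_separator_same_diag)
    with M M' show ?thesis using sep by (rule separates_transfer)
  qed
  then show ?thesis using assms by (metis (full_types))
qed

theorem separation_models_same_tree:
  assumes "tree_separation_model E1 d1 s" "tree_separation_model E2 d2 s"
  shows "E1 = E2"
proof (intro ext)
  interpret M1: tree_separation_model E1 d1 s by fact
  interpret M2: tree_separation_model E2 d2 s by fact
  show "E1 a b = E2 a b" for a b
    by (simp only: M1.adjacent_iff_unseparated M2.adjacent_iff_unseparated separates_iff[OF assms])
qed

section \<open>Positive definite matrices and M-matrices\<close>

lemma quadratic_form_two_axes:
  fixes A :: "real^'n^'n"
  shows "(a *\<^sub>R axis i 1 + b *\<^sub>R axis j 1) \<bullet> (A *v (a *\<^sub>R axis i 1 + b *\<^sub>R axis j 1)) =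
    a\<^sup>2 * A$i$i + a * b * (A$i$j + A$j$i) + b\<^sup>2 * A$j$j"
  by (simp add: algebra_simps matrix_vector_mult_basis inner_axis' column_def power2_eq_square)

lemma pos_def_entry_sym:
  assumes "pos_def A"
  shows "A$i$j = A$j$i"
proof -
  have "transpose A $ i $ j = A $ i $ j" using assms by (simp add: pos_def_def)
  then show ?thesis by (simp add: transpose_def)
qed

lemma pos_def_diag_pos:
  fixes A :: "real^'n^'n"
  assumes "pos_def A"
  shows "0 < A$i$i"
proof -
  have "axis i 1 \<noteq> (0::real^'n)" by (simp add: axis_eq_0_iff)
  then have "0 < axis i 1 \<bullet> (A *v axis i 1)" using assms by (simp add: pos_def_def)
  then show ?thesis using quadratic_form_two_axes[of 1 i 0 i A] by simp
qed

lemma pos_def_offdiag_sq_less: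
  fixes A :: "real^'n^'n"
  assumes "pos_def A" "i \<noteq> j"
  shows "(A$i$j)\<^sup>2 < A$i$i * A$j$j"
proof -
  let ?x = "A$i$j *\<^sub>R axis i 1 + (- A$i$i) *\<^sub>R axis j 1 :: real^'n"
  have "?x $ j \<noteq> 0" using \<open>i \<noteq> j\<close> pos_def_diag_pos[OF assms(1), of i] by (simp add: axis_def)
  then have "?x \<noteq> 0" by (metis zero_index)
  then have "0 < ?x \<bullet> (A *v ?x)" using assms(1) by (simp add: pos_def_def)
  then have "0 < A$i$i * (A$i$i * A$j$j - (A$i$j)\<^sup>2)"
    unfolding quadratic_form_two_axes pos_def_entry_sym[OF assms(1), of j i]
    by (simp add: algebra_simps power2_eq_square)
  then show ?thesis using pos_def_diag_pos[OF assms(1), of i] by (simp add: zero_less_mult_iff)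
qed

lemma pos_def_invertible:
  fixes A :: "real^'n^'n"
  assumes "pos_def A"
  shows "invertible A"
  unfolding invertible_left_inverse matrix_left_invertible_ker
proof (intro allI impI)
  fix x assume "A *v x = 0"
  then have "x \<bullet> (A *v x) = 0" by simp
  with assms show "x = 0" unfolding pos_def_def by force
qed

lemma matrix_inv_right: "invertible A \<Longrightarrow> A ** matrix_inv A = mat 1"
  and matrix_inv_left: "invertible A \<Longrightarrow> matrix_inv A ** A = mat 1"
  unfolding invertible_def matrix_inv_def by (metis (mono_tags, lifting) someI_ex)+

lemma pos_def_matrix_inv:
  fixes A :: "real^'n^'n"
  assumes "pos_def A"
  shows "pos_def (matrix_inv A)"
  unfolding pos_def_def
proof (intro conjI allI impI)
  let ?B = "matrix_inv A"
  have right: "A ** ?B = mat 1" and left: "?B ** A = mat 1"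
    using pos_def_invertible[OF assms] by (simp_all add: matrix_inv_right matrix_inv_left)
  have "transpose A = A" using assms by (simp add: pos_def_def)
  then have "transpose ?B ** A = mat 1"
    using arg_cong[OF right, of transpose] by (simp add: matrix_transpose_mul)
  then show "transpose ?B = ?B" by (metis left right matrix_mul_assoc matrix_mul_lid matrix_mul_rid)
  fix x :: "real^'n" assume "x \<noteq> 0"
  define y where "y = ?B *v x"
  have "A *v y = x" by (simp add: y_def matrix_vector_mul_assoc right)
  with \<open>x \<noteq> 0\<close> have "y \<noteq> 0" by auto
  then have "0 < y \<bullet> (A *v y)" using assms by (simp add: pos_def_def)
  then show "0 < x \<bullet> (?B *v x)" using \<open>A *v y = x\<close> by (simp add: y_def inner_commute)
qed

lemma sign_conj_mult_vec:
  fixes A :: "real^'n^'n"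
  assumes "\<And>i. \<sigma> i * \<sigma> i = 1"
  shows "(\<chi> i j. \<sigma> i * \<sigma> j * A$i$j) *v (\<chi> i. \<sigma> i * v$i) = (\<chi> i. \<sigma> i * (A *v v)$i)"
proof -
  have "\<sigma> i * \<sigma> j * A$i$j * (\<sigma> j * v$j) = \<sigma> i * (A$i$j * v$j)" for i j
    using assms[of j] by (simp add: algebra_simps)
  then have "(\<Sum>j\<in>UNIV. \<sigma> i * \<sigma> j * A$i$j * (\<sigma> j * v$j)) = \<sigma> i * (\<Sum>j\<in>UNIV. A$i$j * v$j)" for i
    unfolding sum_distrib_left by (intro sum.cong refl)
  then show ?thesis by (simp add: vec_eq_iff matrix_vector_mult_def)
qed

lemma sign_conj_quadratic_pos:
  fixes A :: "real^'n^'n"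
  assumes "\<And>i. \<sigma> i * \<sigma> i = 1" and pos: "\<And>x. x \<noteq> 0 \<Longrightarrow> 0 < x \<bullet> (A *v x)"
    and "x \<noteq> 0"
  shows "0 < x \<bullet> ((\<chi> i j. \<sigma> i * \<sigma> j * A$i$j) *v x)"
proof -
  define y where "y = (\<chi> i. \<sigma> i * x$i)"
  have x: "x = (\<chi> i. \<sigma> i * y$i)"
    using assms(1) by (simp add: y_def vec_eq_iff mult.assoc[symmetric])
  have "y \<noteq> 0" using \<open>x \<noteq> 0\<close> by (auto simp: x vec_eq_iff)
  then have "0 < y \<bullet> (A *v y)" by (rule pos)
  also have "(\<chi> i j. \<sigma> i * \<sigma> j * A$i$j) *v x = (\<chi> i. \<sigma> i * (A *v y)$i)"
    by (subst x) (rule sign_conj_mult_vec[OF assms(1)])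
  then have "y \<bullet> (A *v y) = x \<bullet> ((\<chi> i j. \<sigma> i * \<sigma> j * A$i$j) *v x)"
    by (simp add: inner_vec_def y_def mult_ac)
  finally show ?thesis .
qed

lemma M_matrix_minimum_principle:
  fixes A :: "real^'n^'n" and u :: "real^'n"
  assumes pos: "\<And>x. x \<noteq> 0 \<Longrightarrow> 0 < x \<bullet> (A *v x)" and offdiag: "\<And>i j. i \<noteq> j \<Longrightarrow> A$i$j \<le> 0"
    and super: "\<And>i. u$i < 0 \<Longrightarrow> 0 \<le> (A *v u)$i"
  shows "0 \<le> u$i"
proof -
  define m where "m = (\<chi> i. min (u$i) 0)"
  define q where "q = u - m"
  have "m$i * (A *v u)$i \<le> 0" for i
    using super[of i] by (cases "u$i < 0") (auto simp: m_def mult_nonpos_nonneg)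
  then have "m \<bullet> (A *v u) \<le> 0" unfolding inner_vec_def by (simp add: sum_nonpos)
  moreover have "0 \<le> m$i * (A$i$j * q$j)" for i j
  proof (cases "i = j")
    case True
    then show ?thesis by (cases "u$i < 0") (auto simp: m_def q_def)
  next
    case False
    have "m$i \<le> 0" "0 \<le> q$j" by (auto simp: m_def q_def)
    with offdiag[OF False] show ?thesis by (simp add: mult_nonpos_nonpos mult_nonpos_nonneg)
  qed
  then have "0 \<le> m \<bullet> (A *v q)"
    unfolding inner_vec_def matrix_vector_mult_def by (simp add: sum_distrib_left sum_nonneg)
  moreover have "m \<bullet> (A *v m) = m \<bullet> (A *v u) - m \<bullet> (A *v q)"
    by (simp add: q_def matrix_vector_mult_diff_distrib inner_diff_right)
  ultimately have "\<not> 0 < m \<bullet> (A *v m)" by simp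
  then have "m = 0" using pos by blast
  then have "min (u$i) 0 = 0" by (metis m_def vec_lambda_beta zero_index)
  then show ?thesis by simp
qed

lemma M_matrix_zero_spreads:
  fixes A :: "real^'n^'n" and u :: "real^'n"
  assumes offdiag: "\<And>i j. i \<noteq> j \<Longrightarrow> A$i$j \<le> 0" and nonneg: "\<And>i. 0 \<le> u$i"
    and "(a, b) \<in> {(i, j). i \<noteq> j \<and> A$i$j \<noteq> 0 \<and> 0 \<le> (A *v u)$i}\<^sup>*" and "u$a = 0"
  shows "u$b = 0"
  using assms(3,4)
proof (induction rule: rtrancl_induct)
  case base
  then show ?case .
next
  case (step i j)
  then have "i \<noteq> j" "A$i$j \<noteq> 0" "0 \<le> (A *v u)$i" "u$i = 0" by auto
  have terms: "0 \<le> - (A$i$k * u$k)" for k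
    using offdiag[of i k] nonneg[of k] \<open>u$i = 0\<close> by (cases "k = i") (auto simp: mult_nonpos_nonneg)
  moreover have "(\<Sum>k\<in>UNIV. - (A$i$k * u$k)) \<le> 0"
    using \<open>0 \<le> (A *v u)$i\<close> by (simp add: matrix_vector_mult_def sum_negf)
  ultimately have "\<forall>k\<in>UNIV. - (A$i$k * u$k) = 0"
    using sum_nonneg_eq_0_iff[of UNIV "\<lambda>k. - (A$i$k * u$k)"] by (simp add: sum_nonneg order_antisym)
  with \<open>A$i$j \<noteq> 0\<close> show ?case by (metis UNIV_I mult_eq_0_iff neg_equal_0_iff_equal)
qed

lemma pos_def_null_on_support:
  fixes A :: "real^'n^'n"
  assumes "pos_def A" and "\<And>x. w$x \<noteq> 0 \<Longrightarrow> (A *v w)$x = 0"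
  shows "w = 0"
proof -
  have "w \<bullet> (A *v w) = 0"
    unfolding inner_vec_def by (rule sum.neutral) (use assms(2) in auto)
  then show ?thesis using assms(1) unfolding pos_def_def by force
qed

section \<open>Covariances with a tree-structured precision matrix\<close>

definition off_diag :: "real^'n^'n \<Rightarrow> 'n \<Rightarrow> 'n \<Rightarrow> real" where
  "off_diag S a b = (if a = b then 0 else S$a$b)"

locale tree_covariance =
  fixes S :: "real^'n::finite^'n"
  assumes pos_def: "pos_def S" and ci_tree: "is_tree (ci_adj S)" and leaf_cond: "leaf_cond S"
begin

abbreviation \<Omega> :: "real^'n^'n" where "\<Omega> \<equiv> matrix_inv S"

lemma inverse_left: "\<Omega> ** S = mat 1"
  using matrix_inv_left[OF pos_def_invertible[OF pos_def]] .

lemma inverse_mult_entries: "(\<Sum>k\<in>UNIV. \<Omega>$a$k * S$k$b) = (if a = b then 1 else 0)"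
  using arg_cong[OF inverse_left, of "\<lambda>M. M$a$b"] by (simp add: matrix_matrix_mult_def mat_def)

lemma inverse_pos_def: "pos_def \<Omega>"
  using pos_def_matrix_inv[OF pos_def] .

sublocale tree_graph "ci_adj S"
  by unfold_locales
     (auto simp: ci_adj_def pos_def_entry_sym[OF inverse_pos_def] intro: ci_tree)

lemma sign_pattern:
  obtains \<sigma> :: "'n \<Rightarrow> real"
  where "\<And>x. \<sigma> x * \<sigma> x = 1" and "\<And>x y. x \<noteq> y \<Longrightarrow> \<sigma> x * \<sigma> y * \<Omega>$x$y \<le> 0"
proof -
  have "(0 < \<Omega>$a$b) = (0 < \<Omega>$b$a)" for a b
    by (simp add: pos_def_entry_sym[OF inverse_pos_def])
  then obtain t :: "'n \<Rightarrow> bool" where t: "\<And>a b. ci_adj S a b \<Longrightarrow> t a \<noteq> t b \<longleftrightarrow> 0 < \<Omega>$a$b"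
    using acyclic_labelling_is_cut[OF edge_sym edge_irrefl acyclic, of "\<lambda>a b. 0 < \<Omega>$a$b"] by blast
  define \<sigma> where "\<sigma> x = (if t x then 1 else - 1 :: real)" for x
  have "\<sigma> a * \<sigma> b * \<Omega>$a$b \<le> 0" if "a \<noteq> b" for a b
  proof (cases "ci_adj S a b")
    case True
    then show ?thesis using t[OF True] by (cases "t a"; cases "t b") (auto simp: \<sigma>_def)
  next
    case False
    with that show ?thesis by (simp add: ci_adj_def)
  qed
  moreover have "\<sigma> x * \<sigma> x = 1" for x by (simp add: \<sigma>_def)
  ultimately show ?thesis using that by blast
qed

text \<open>Conjugating \<Omega> by the sign pattern gives an M-matrix, to which the minimum principle
  and the spreading of zeros apply.\<close>

lemma signed_solution_positive:
  assumes sign_sq: "\<And>x. \<sigma> x * \<sigma> x = 1"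
    and sign_offdiag: "\<And>x y. x \<noteq> y \<Longrightarrow> \<sigma> x * \<sigma> y * \<Omega>$x$y \<le> 0"
    and solves: "\<And>x. x \<notin> C \<Longrightarrow> (\<Omega> *v v)$x = (if x = b then 1 else 0)"
    and vanishes: "\<And>x. x \<in> C \<Longrightarrow> v$x = 0"
    and "0 < v$b"
    and path: "(a, b) \<in> {(x, y). ci_adj S x y \<and> x \<notin> C \<and> y \<notin> C}\<^sup>*"
  shows "0 < \<sigma> a * \<sigma> b * v$a"
proof -
  define M where "M = (\<chi> i j. \<sigma> i * \<sigma> j * \<Omega>$i$j)"
  define u where "u = (\<chi> i. \<sigma> i * (\<sigma> b * v$i))"
  have Mu: "(M *v u)$x = \<sigma> x * \<sigma> b * (\<Omega> *v v)$x" for x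
    using sign_conj_mult_vec[where \<sigma> = \<sigma> and A = \<Omega> and v = "\<sigma> b *\<^sub>R v", OF sign_sq]
    by (simp add: M_def u_def matrix_vector_mult_scaleR mult_ac)
  have offdiag: "M$i$j \<le> 0" if "i \<noteq> j" for i j
    using sign_offdiag[OF that] by (simp add: M_def)
  have super: "0 \<le> (M *v u)$x" if "x \<notin> C" for x
    using sign_sq[of b] by (simp add: Mu solves[OF that])
  have nonneg: "0 \<le> u$x" for x
  proof (rule M_matrix_minimum_principle[OF _ offdiag])
    show "0 < y \<bullet> (M *v y)" if "y \<noteq> 0" for y
      unfolding M_def using sign_conj_quadratic_pos[where \<sigma> = \<sigma>, OF sign_sq _ that] inverse_pos_def
      by (simp add: pos_def_def)
    show "0 \<le> (M *v u)$x" if "u$x < 0" for x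
      using that super vanishes by (force simp: u_def)
  qed
  have "(a, b) \<in> {(i, j). i \<noteq> j \<and> M$i$j \<noteq> 0 \<and> 0 \<le> (M *v u)$i}\<^sup>*"
  proof (rule rtrancl_mono[THEN subsetD, OF _ path], clarify)
    fix x y assume "ci_adj S x y" "x \<notin> C"
    moreover have "\<sigma> x \<noteq> 0" "\<sigma> y \<noteq> 0" using sign_sq by (metis mult_zero_left zero_neq_one)+
    ultimately show "x \<noteq> y \<and> M$x$y \<noteq> 0 \<and> 0 \<le> (M *v u)$x"
      using super by (simp add: M_def ci_adj_def)
  qed
  moreover have "u$b \<noteq> 0" using \<open>0 < v$b\<close> sign_sq[of b] by (simp add: u_def mult.assoc[symmetric])
  ultimately have "u$a \<noteq> 0" using M_matrix_zero_spreads[OF offdiag nonneg] by blast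
  with nonneg[of a] have "0 < u$a" by linarith
  then show ?thesis by (simp add: u_def mult.assoc)
qed

lemma signed_cov_pos:
  assumes "\<And>x. \<sigma> x * \<sigma> x = 1" and "\<And>x y. x \<noteq> y \<Longrightarrow> \<sigma> x * \<sigma> y * \<Omega>$x$y \<le> 0"
  shows "0 < \<sigma> a * \<sigma> b * S$a$b"
proof -
  have "0 < \<sigma> a * \<sigma> b * (S *v axis b 1)$a"
  proof (rule signed_solution_positive[OF assms, where C = "{}"])
    show "(\<Omega> *v (S *v axis b 1))$x = (if x = b then 1 else 0)" for x
      by (simp add: matrix_vector_mul_assoc inverse_left axis_def)
    show "0 < (S *v axis b 1)$b"
      using pos_def_diag_pos[OF pos_def] by (simp add: matrix_vector_mult_basis column_def)
    show "(a, b) \<in> {(x, y). ci_adj S x y \<and> x \<notin> {} \<and> y \<notin> {}}\<^sup>*"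
      using connected by simp
  qed auto
  then show ?thesis by (simp add: matrix_vector_mult_basis column_def)
qed

lemma cov_nonzero: "S$a$b \<noteq> 0"
proof -
  obtain \<sigma> :: "'n \<Rightarrow> real"
    where "\<And>x. \<sigma> x * \<sigma> x = 1" "\<And>x y. x \<noteq> y \<Longrightarrow> \<sigma> x * \<sigma> y * \<Omega>$x$y \<le> 0"
    using sign_pattern by blast
  from signed_cov_pos[OF this, of a b] show ?thesis by auto
qed

text \<open>\<open>cond_cov c b $ y\<close> is the covariance of \<open>X\<^sub>y\<close> and \<open>X\<^sub>b\<close> conditional on \<open>X\<^sub>c\<close>.\<close>

definition cond_cov :: "'n \<Rightarrow> 'n \<Rightarrow> real^'n" where
  "cond_cov c b = S *v (axis b 1 - (S$c$b / S$c$c) *\<^sub>R axis c 1)"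

lemma cond_cov_nth: "cond_cov c b $ y = S$y$b - S$c$b / S$c$c * S$y$c"
  by (simp add: cond_cov_def algebra_simps matrix_vector_mult_basis column_def)

lemma inverse_cond_cov: "\<Omega> *v cond_cov c b = axis b 1 - (S$c$b / S$c$c) *\<^sub>R axis c 1"
  by (simp add: cond_cov_def matrix_vector_mul_assoc inverse_left)

lemma cond_cov_vanishes: "cond_cov c b $ c = 0"
  using pos_def_diag_pos[OF pos_def, of c] by (simp add: cond_cov_nth)

lemma cond_cov_diag_pos:
  assumes "b \<noteq> c"
  shows "0 < cond_cov c b $ b"
proof -
  have "(S$c$b)\<^sup>2 < S$c$c * S$b$b" using pos_def_offdiag_sq_less[OF pos_def] assms by auto
  then show ?thesis using pos_def_diag_pos[OF pos_def, of c] pos_def_entry_sym[OF pos_def, of b c]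
    by (simp add: cond_cov_nth field_simps power2_eq_square)
qed

text \<open>On the component of a in the tree without c, \<Omega> annihilates \<open>cond_cov c b\<close>, so the
  positive definite form of \<Omega> forces \<open>cond_cov c b\<close> to vanish there.\<close>

lemma separated_product:
  assumes sep: "separates (ci_adj S) c a b"
  shows "S$a$b * S$c$c = S$a$c * S$c$b"
proof -
  define K where "K = {x. (a, x) \<in> (avoiding (ci_adj S) c)\<^sup>*}"
  define w where "w = (\<chi> x. if x \<in> K then cond_cov c b $ x else 0)"
  have "a \<in> K" "b \<notin> K" using sep by (auto simp: K_def separates_def)
  have K_not_c: "x \<noteq> c" if "x \<in> K" for x
    using that[unfolded K_def mem_Collect_eq] separates_distinct[OF sep]
    by (cases rule: rtranclE) (auto simp: avoiding_def)
  have "(\<Omega> *v w)$x = 0" if "x \<in> K" for x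
  proof -
    have terms: "\<Omega>$x$y * w$y = \<Omega>$x$y * cond_cov c b $ y" for y
    proof (cases "y \<in> K")
      case False
      have "(x, y) \<notin> avoiding (ci_adj S) c"
      proof
        assume "(x, y) \<in> avoiding (ci_adj S) c"
        with \<open>x \<in> K\<close> have "y \<in> K" unfolding K_def by (simp add: rtrancl_into_rtrancl)
        with False show False by contradiction
      qed
      moreover have "x \<noteq> y" "x \<noteq> c" using False \<open>x \<in> K\<close> K_not_c by auto
      ultimately have "\<Omega>$x$y = 0 \<or> y = c" by (auto simp: avoiding_def ci_adj_def)
      then show ?thesis using False cond_cov_vanishes by (auto simp: w_def)
    qed (simp add: w_def)
    have "(\<Omega> *v w)$x = (\<Omega> *v cond_cov c b)$x"
      unfolding matrix_vector_mult_def vec_lambda_beta by (rule sum.cong[OF refl terms])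
    also have "\<dots> = 0"
      using K_not_c[OF that] \<open>b \<notin> K\<close> that by (auto simp: inverse_cond_cov axis_def)
    finally show ?thesis .
  qed
  moreover have "x \<in> K" if "w$x \<noteq> 0" for x
    using that by (simp add: w_def split: if_splits)
  ultimately have "w = 0" by (intro pos_def_null_on_support[OF inverse_pos_def]) blast
  moreover have "w$a = cond_cov c b $ a" using \<open>a \<in> K\<close> by (simp add: w_def)
  ultimately have "cond_cov c b $ a = 0" by simp
  then show ?thesis using pos_def_diag_pos[OF pos_def, of c] by (simp add: cond_cov_nth field_simps)
qed

lemma unseparated_product:
  assumes "a \<noteq> b" "a \<noteq> c" "b \<noteq> c" "\<not> separates (ci_adj S) c a b"
  shows "0 < S$a$b * (S$a$b * S$c$c - S$a$c * S$c$b)"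
proof -
  obtain \<sigma> :: "'n \<Rightarrow> real"
    where sign: "\<And>x. \<sigma> x * \<sigma> x = 1" "\<And>x y. x \<noteq> y \<Longrightarrow> \<sigma> x * \<sigma> y * \<Omega>$x$y \<le> 0"
    using sign_pattern by blast
  have "0 < \<sigma> a * \<sigma> b * cond_cov c b $ a"
  proof (rule signed_solution_positive[OF sign, where C = "{c}"])
    show "(\<Omega> *v cond_cov c b)$x = (if x = b then 1 else 0)" if "x \<notin> {c}" for x
      using that by (auto simp: inverse_cond_cov axis_def)
    show "cond_cov c b $ x = 0" if "x \<in> {c}" for x
      using that cond_cov_vanishes by simp
    show "0 < cond_cov c b $ b" using cond_cov_diag_pos \<open>b \<noteq> c\<close> .
    show "(a, b) \<in> {(x, y). ci_adj S x y \<and> x \<notin> {c} \<and> y \<notin> {c}}\<^sup>*"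
      using assms by (simp add: separates_def avoiding_def)
  qed
  moreover have "0 < \<sigma> a * \<sigma> b * S$a$b" using signed_cov_pos[OF sign] .
  ultimately have "0 < (\<sigma> a * \<sigma> b * S$a$b) * (\<sigma> a * \<sigma> b * cond_cov c b $ a)"
    by (rule mult_pos_pos[rotated])
  also have "\<dots> = (\<sigma> a * \<sigma> a) * (\<sigma> b * \<sigma> b) * (S$a$b * cond_cov c b $ a)"
    by (simp add: mult_ac)
  finally have "0 < S$c$c * (S$a$b * cond_cov c b $ a)"
    using sign(1) pos_def_diag_pos[OF pos_def, of c] by simp
  also have "S$c$c * (S$a$b * cond_cov c b $ a) = S$a$b * (S$a$b * S$c$c - S$a$c * S$c$b)"
    using pos_def_diag_pos[OF pos_def, of c] by (simp add: cond_cov_nth field_simps)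
  finally show ?thesis .
qed

lemma leaf_edge_less:
  assumes leaf: "is_leaf (ci_adj S) a" and edge: "ci_adj S a b"
  shows "\<bar>S$a$b\<bar> < S$b$b"
proof -
  have "a \<noteq> b" using adjacent_distinct[OF edge] .
  have "\<Omega>$a$k = 0" if "k \<noteq> a" "k \<noteq> b" for k
    using leaf_neighbour_unique[OF leaf edge, of k] that by (auto simp: ci_adj_def)
  then have "(\<Sum>k\<in>UNIV. \<Omega>$a$k * S$k$b) = (\<Sum>k\<in>{a, b}. \<Omega>$a$k * S$k$b)"
    by (intro sum.mono_neutral_right) auto
  then have "\<Omega>$a$a * S$a$b = - (\<Omega>$a$b * S$b$b)"
    using inverse_mult_entries[of a b] \<open>a \<noteq> b\<close> by simp
  then have "\<bar>\<Omega>$a$a * S$a$b\<bar> = \<bar>\<Omega>$a$b * S$b$b\<bar>" by simp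
  then have "\<bar>\<Omega>$a$a\<bar> * \<bar>S$a$b\<bar> = \<bar>\<Omega>$a$b\<bar> * \<bar>S$b$b\<bar>" by (simp only: abs_mult)
  then have "\<Omega>$a$a * \<bar>S$a$b\<bar> = \<bar>\<Omega>$a$b\<bar> * S$b$b"
    using pos_def_diag_pos[OF inverse_pos_def, of a] pos_def_diag_pos[OF pos_def, of b] by simp
  also have "\<dots> < \<Omega>$a$a * S$b$b"
    using leaf_cond leaf edge pos_def_diag_pos[OF pos_def, of b] by (simp add: leaf_cond_def)
  finally show ?thesis using pos_def_diag_pos[OF inverse_pos_def, of a] by simp
qed

lemma separation_model: "tree_separation_model (ci_adj S) (\<lambda>c. S$c$c) (off_diag S)"
proof unfold_locales
  show "off_diag S a b = off_diag S b a" for a b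
    by (simp add: off_diag_def pos_def_entry_sym[OF pos_def])
  show "a \<noteq> b \<Longrightarrow> off_diag S a b \<noteq> 0" for a b
    by (simp add: off_diag_def cov_nonzero)
  show "0 < S$a$a" for a
    using pos_def_diag_pos[OF pos_def] .
  show "a \<noteq> b \<Longrightarrow> (off_diag S a b)\<^sup>2 < S$a$a * S$b$b" for a b
    by (simp add: off_diag_def pos_def_offdiag_sq_less[OF pos_def])
  show "off_diag S a b * S$c$c = off_diag S a c * off_diag S c b"
    if "separates (ci_adj S) c a b" for a b c
    using separated_product[OF that] separates_distinct[OF that] by (auto simp: off_diag_def)
  show "a \<noteq> b \<Longrightarrow> a \<noteq> c \<Longrightarrow> b \<noteq> c \<Longrightarrow> \<not> separates (ci_adj S) c a b \<Longrightarrow>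
      0 < off_diag S a b * (off_diag S a b * S$c$c - off_diag S a c * off_diag S c b)" for a b c
    using unseparated_product by (simp add: off_diag_def)
  show "is_leaf (ci_adj S) a \<Longrightarrow> ci_adj S a b \<Longrightarrow> \<bar>off_diag S a b\<bar> < S$b$b" for a b
    using leaf_edge_less adjacent_distinct by (simp add: off_diag_def)
qed

end

theorem theorem4:
  fixes S_star D_star S_o S' D' :: "real^'n::finite^'n"
  assumes "pos_def S_star" and "is_tree (ci_adj S_star)" and "leaf_cond S_star"
    and "nonneg_diag D_star" and "S_o = S_star + D_star"
    and "S_o = S' + D'" and "pos_def S'" and "is_tree (ci_adj S')"
    and "nonneg_diag D'" and "leaf_cond S'"
  shows "ci_adj S' = ci_adj S_star"
proof -
  \<comment> \<open>Only the vanishing of the off-diagonal entries of D_star and D' is used, not their signs.\<close>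
  interpret star: tree_covariance S_star using assms(1-3) by unfold_locales
  interpret prime: tree_covariance S' using assms(7,8,10) by unfold_locales
  have "off_diag S' = off_diag S_star"
  proof (intro ext)
    fix a b
    have "S'$a$b + D'$a$b = S_star$a$b + D_star$a$b"
      using arg_cong[OF assms(5), of "\<lambda>M. M$a$b"] arg_cong[OF assms(6), of "\<lambda>M. M$a$b"] by simp
    then show "off_diag S' a b = off_diag S_star a b"
      using assms(4,9) by (auto simp: off_diag_def nonneg_diag_def)
  qed
  with star.separation_model prime.separation_model show ?thesis
    by (metis separation_models_same_tree)
qed

end
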